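(* Let $r\ge 1$, let $(s_1,\ldots,s_r)$ be an $r$-tuple of positive integers, and let $n\ge r$ be an integer. Then $H^{\star}_n(s_1,\ldots,s_r)$ is not an integer, except in the case $n=r=1$, where $H^{\star}_1(s_1)=1$.
   Context: For an $r$-tuple of positive integers $(s_1,\ldots,s_r)$ and an integer $n\ge r$, the multiple harmonic star sum is $H^{\star}_n(s_1,\ldots,s_r)=\sum_{1\le k_1\le k_2\le\cdots\le k_r\le n}\frac{1}{k_1^{s_1}\cdots k_r^{s_r}}$, the sum over all non-decreasing $r$-tuples of integers in $\{1,\dots,n\}$. *)

theory Defs
  imports Complex_Main
begin

definition star_tuples :: "nat \<Rightarrow> nat \<Rightarrow> nat list set" where
  "star_tuples r n = {ks. length ks = r \<and> sorted ks \<and> set ks \<subseteq> {1..n}}"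

definition H_star :: "nat \<Rightarrow> nat list \<Rightarrow> real" where
  "H_star n s = (\<Sum>ks\<in>star_tuples (length s) n.
       1 / (\<Prod>i<length s. real (ks ! i) ^ (s ! i)))"

end

theory Submission
  imports Defs "HOL-Computational_Algebra.Primes"
begin

text \<open>Let \<open>2^m \<le> n < 2^(m+1)\<close>. Every \<open>k \<le> n\<close> has 2-adic valuation at most \<open>m\<close>, with
  equality only for \<open>k = 2^m\<close>, so among all denominators \<open>k\<^sub>1^s\<^sub>1 \<cdots> k\<^sub>r^s\<^sub>r\<close> the one of
  the constant tuple \<open>(2^m, \<dots>, 2^m)\<close> has strictly the largest 2-adic valuation
  \<open>m (s\<^sub>1 + \<dots> + s\<^sub>r)\<close>, which is positive once \<open>n \<ge> 2\<close>. A sum of reciprocals with a unique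
  denominator of maximal positive \<open>p\<close>-adic valuation is never an integer: multiplying by
  the product \<open>L\<close> of all denominators, every term but one becomes divisible by a higher
  power of \<open>p\<close> than the exceptional one, whereas an integral sum would be divisible by
  the full power of \<open>p\<close> in \<open>L\<close>.\<close>

lemma sum_inverse_not_Ints_unique_max_multiplicity:
  fixes p :: nat and D :: "'a \<Rightarrow> nat"
  assumes "prime p" "finite T" "c \<in> T"
    and D_pos: "\<forall>k\<in>T. D k > 0"
    and c_pos: "multiplicity p (D c) > 0"
    and c_max: "\<forall>k\<in>T - {c}. multiplicity p (D k) < multiplicity p (D c)"
  shows "(\<Sum>k\<in>T. 1 / real (D k)) \<notin> \<int>"
proof
  assume "(\<Sum>k\<in>T. 1 / real (D k)) \<in> \<int>"
  then obtain z where z: "(\<Sum>k\<in>T. 1 / real (D k)) = of_int z" by (auto elim: Ints_cases)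
  define L where "L = (\<Prod>k\<in>T. D k)"
  define G where "G k = (\<Prod>j\<in>T - {k}. D j)" for k
  define V where "V = multiplicity p L"
  define E where "E = multiplicity p (D c)"
  have L_eq: "L = D k * G k" if "k \<in> T" for k
    unfolding L_def G_def using \<open>finite T\<close> that by (rule prod.remove)
  have G_pos: "G k > 0" for k
    unfolding G_def using D_pos by (intro prod_pos) auto
  have V_eq: "V = multiplicity p (D k) + multiplicity p (G k)" if "k \<in> T" for k
    unfolding V_def L_eq[OF that] using D_pos that G_pos[of k] \<open>prime p\<close>
    by (intro prime_elem_multiplicity_mult_distrib) auto
  have "real (\<Sum>k\<in>T. G k) = real L * (\<Sum>k\<in>T. 1 / real (D k))"
    unfolding sum_distrib_left of_nat_sum
    using L_eq D_pos by (intro sum.cong) auto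
  hence "int (\<Sum>k\<in>T. G k) = int L * z"
    unfolding z by (metis of_int_eq_iff of_int_mult of_int_of_nat_eq)
  hence "L dvd (\<Sum>k\<in>T. G k)"
    by (metis dvd_triv_left int_dvd_int_iff)
  hence "p ^ V dvd (\<Sum>k\<in>T. G k)"
    unfolding V_def using multiplicity_dvd dvd_trans by blast
  moreover have V_c: "V = E + multiplicity p (G c)"
    unfolding E_def using \<open>c \<in> T\<close> by (rule V_eq)
  then have "V - E + 1 \<le> V"
    using c_pos unfolding E_def by simp
  then have "p ^ (V - E + 1) dvd p ^ V"
    by (rule le_imp_power_dvd)
  ultimately have "p ^ (V - E + 1) dvd (\<Sum>k\<in>T. G k)"
    by (rule dvd_trans[rotated])
  then have "p ^ (V - E + 1) dvd G c + (\<Sum>k\<in>T - {c}. G k)"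
    by (simp add: sum.remove[OF \<open>finite T\<close> \<open>c \<in> T\<close>])
  moreover have "p ^ (V - E + 1) dvd (\<Sum>k\<in>T - {c}. G k)"
  proof (intro dvd_sum multiplicity_dvd')
    fix k assume k: "k \<in> T - {c}"
    then have "multiplicity p (D k) < E"
      using c_max unfolding E_def by blast
    moreover have "V = multiplicity p (D k) + multiplicity p (G k)"
      using k by (intro V_eq) simp
    ultimately show "V - E + 1 \<le> multiplicity p (G k)"
      using V_c by linarith
  qed
  ultimately have "p ^ (V - E + 1) dvd G c"
    by (simp add: dvd_add_left_iff)
  hence "V - E + 1 \<le> multiplicity p (G c)"
    using G_pos[of c] \<open>prime p\<close> by (intro multiplicity_geI) auto
  thus False
    using V_c by simp
qed

lemma multiplicity_le_of_less_power:
  fixes p x :: nat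
  assumes "x > 0" "p > 1" "x < p ^ (m + 1)"
  shows "multiplicity p x \<le> m"
proof -
  have "p ^ multiplicity p x \<le> x"
    using multiplicity_dvd assms(1) by (rule dvd_imp_le)
  hence "p ^ multiplicity p x < p ^ (m + 1)"
    using assms(3) by linarith
  hence "multiplicity p x < m + 1"
    by (rule power_less_imp_less_exp[OF assms(2)])
  thus ?thesis
    by simp
qed

lemma eq_power_of_multiplicity_eq:
  fixes p x :: nat
  assumes "x > 0" "x < 2 * p ^ m" "multiplicity p x = m"
  shows "x = p ^ m"
proof -
  obtain q where q: "x = p ^ m * q"
    using multiplicity_dvd[of p x] unfolding assms(3) by blast
  with assms(1,2) have "q = 1"
    by (cases q) (auto simp: less_Suc_eq)
  with q show ?thesis by simp
qed

lemma finite_star_tuples: "finite (star_tuples r n)"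
proof (rule finite_subset)
  show "star_tuples r n \<subseteq> {ks. set ks \<subseteq> {1..n} \<and> length ks = r}"
    unfolding star_tuples_def by auto
qed (simp add: finite_lists_length_eq)

lemma star_tuples_nth:
  assumes "ks \<in> star_tuples r n" "i < r"
  shows "1 \<le> ks ! i" "ks ! i \<le> n"
proof -
  have "ks ! i \<in> set ks"
    using assms unfolding star_tuples_def by simp
  also have "\<dots> \<subseteq> {1..n}"
    using assms(1) unfolding star_tuples_def by simp
  finally show "1 \<le> ks ! i" "ks ! i \<le> n"
    by auto
qed

lemma replicate_in_star_tuples:
  "1 \<le> k \<Longrightarrow> k \<le> n \<Longrightarrow> replicate r k \<in> star_tuples r n"
  unfolding star_tuples_def by (auto simp: sorted_replicate)

lemma star_tuples_one: "star_tuples r 1 = {replicate r 1}"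
  unfolding star_tuples_def by (auto simp: sorted_replicate intro: replicate_eqI)

definition star_denom :: "nat list \<Rightarrow> nat list \<Rightarrow> nat" where
  "star_denom s ks = (\<Prod>i<length s. ks ! i ^ s ! i)"

lemma H_star_eq_sum_star_denom:
  "H_star n s = (\<Sum>ks\<in>star_tuples (length s) n. 1 / real (star_denom s ks))"
  unfolding H_star_def star_denom_def by simp

lemma H_star_one: "H_star 1 s = 1"
  unfolding H_star_def star_tuples_one by simp

lemma star_denom_pos: "ks \<in> star_tuples (length s) n \<Longrightarrow> star_denom s ks > 0"
  unfolding star_denom_def by (intro prod_pos) (auto dest: star_tuples_nth(1))

lemma multiplicity_star_denom:
  fixes p :: nat
  assumes "prime p" "ks \<in> star_tuples (length s) n"
  shows "multiplicity p (star_denom s ks) = (\<Sum>i<length s. s ! i * multiplicity p (ks ! i))"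
proof -
  have nonzero: "ks ! i \<noteq> 0" if "i < length s" for i
    using star_tuples_nth(1)[OF assms(2) that] by simp
  have "multiplicity p (star_denom s ks) = (\<Sum>i<length s. multiplicity p (ks ! i ^ s ! i))"
    unfolding star_denom_def using assms(1)
    by (intro prime_elem_multiplicity_prod_distrib) (auto dest: nonzero)
  also have "\<dots> = (\<Sum>i<length s. s ! i * multiplicity p (ks ! i))"
    using assms(1) nonzero by (intro sum.cong prime_elem_multiplicity_power_distrib) auto
  finally show ?thesis .
qed

lemma multiplicity_two_star_denom_less:
  assumes ks: "ks \<in> star_tuples (length s) n" "ks \<noteq> replicate (length s) (2 ^ m)"
    and s_pos: "\<forall>x\<in>set s. x > 0" and n_less: "n < 2 ^ (m + 1)"
  shows "multiplicity 2 (star_denom s ks) < (\<Sum>i<length s. s ! i * m)"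
proof -
  have "length ks = length s"
    using ks(1) unfolding star_tuples_def by simp
  then obtain i where i: "i < length s" "ks ! i \<noteq> 2 ^ m"
    using ks(2) by (metis length_replicate nth_equalityI nth_replicate)
  have bounds: "1 \<le> ks ! j" "ks ! j < 2 * 2 ^ m" if "j < length s" for j
    using star_tuples_nth[OF ks(1) that] n_less by auto
  have "multiplicity 2 (ks ! i) \<noteq> m"
    using eq_power_of_multiplicity_eq[of "ks ! i" 2 m] bounds[OF i(1)] i(2) by auto
  moreover have "multiplicity 2 (ks ! i) \<le> m"
    using bounds[OF i(1)] by (intro multiplicity_le_of_less_power) auto
  moreover have "s ! i > 0"
    using s_pos i(1) nth_mem by blast
  ultimately have "s ! i * multiplicity 2 (ks ! i) < s ! i * m"
    by simp
  moreover have "s ! j * multiplicity 2 (ks ! j) \<le> s ! j * m" if "j < length s" for j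
    using bounds[OF that] by (intro mult_le_mono2 multiplicity_le_of_less_power) auto
  ultimately show ?thesis
    unfolding multiplicity_star_denom[OF two_is_prime_nat ks(1)] using i(1)
    by (intro sum_strict_mono_ex1) auto
qed

lemma multiplicity_star_denom_replicate:
  fixes p :: nat
  assumes "prime p"
  shows "multiplicity p (star_denom s (replicate (length s) (p ^ m))) = (\<Sum>i<length s. s ! i * m)"
proof -
  have "star_denom s (replicate (length s) (p ^ m)) = p ^ (\<Sum>i<length s. s ! i * m)"
    unfolding star_denom_def power_sum by (simp add: power_mult mult.commute)
  thus ?thesis
    using assms by simp
qed

lemma H_star_notin_Ints:
  assumes "s \<noteq> []" "\<forall>x\<in>set s. x > 0" "n \<ge> 2"
  shows "H_star n s \<notin> \<int>"
proof -
  obtain m where m: "2 ^ m \<le> n" "n < 2 ^ (m + 1)"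
    using ex_power_ivl1[of 2 n] assms(3) by auto
  with assms(3) have "m \<ge> 1"
    by (cases m) auto
  define c where "c = replicate (length s) ((2::nat) ^ m)"
  have c_in: "c \<in> star_tuples (length s) n"
    unfolding c_def using m(1) by (intro replicate_in_star_tuples) auto
  have "s ! 0 > 0"
    using assms(1,2) by simp
  with \<open>m \<ge> 1\<close> have c_pos: "multiplicity 2 (star_denom s c) > 0"
    unfolding c_def multiplicity_star_denom_replicate[OF two_is_prime_nat]
    using assms(1) by (intro sum_pos2[of _ 0]) auto
  have c_max: "\<forall>ks\<in>star_tuples (length s) n - {c}.
      multiplicity 2 (star_denom s ks) < multiplicity 2 (star_denom s c)"
    unfolding c_def multiplicity_star_denom_replicate[OF two_is_prime_nat]
    using m(2) assms(2) by (auto intro!: multiplicity_two_star_denom_less)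
  show ?thesis
    unfolding H_star_eq_sum_star_denom
    by (rule sum_inverse_not_Ints_unique_max_multiplicity[OF two_is_prime_nat
          finite_star_tuples c_in _ c_pos c_max]) (simp add: star_denom_pos)
qed

theorem theorem1:
  fixes s :: "nat list" and n :: nat
  assumes "length s \<ge> 1"
    and "\<forall>x\<in>set s. x > 0"
    and "n \<ge> length s"
  shows "(n = 1 \<and> length s = 1 \<longrightarrow> H_star n s = 1)
       \<and> (\<not> (n = 1 \<and> length s = 1) \<longrightarrow> H_star n s \<notin> \<int>)"
proof (intro conjI impI)
  assume "n = 1 \<and> length s = 1"
  then show "H_star n s = 1"
    using H_star_one[of s] by auto
next
  assume "\<not> (n = 1 \<and> length s = 1)"
  with assms have "n \<ge> 2" "s \<noteq> []"
    by auto
  with assms(2) show "H_star n s \<notin> \<int>"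
    by (intro H_star_notin_Ints)
qed

end
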